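(* Let $L\ge2$, $\rho>0$, and let $(\alpha_k)_{k\ge0}$ be nonnegative reals, not all zero, with $\bar\alpha:=\sum_{k\ge1}k\alpha_k\in(0,\infty)$, satisfying the fixed point equations $\alpha_{k+1}u_{k+1}=\rho\,\bar\alpha^{L-1}\alpha_k$ for all $k\ge0$, where $$u_k=k\sum_{k_2,\dots,k_L=1}^{\infty}\Big(\tfrac1k\wedge\tfrac1{k_2}\wedge\cdots\wedge\tfrac1{k_L}\Big)\prod_{i=2}^{L}k_i\alpha_{k_i},\quad k\ge1.$$ Then all $\alpha_k>0$, $\alpha_{k+1}/\alpha_k=\rho\bar\alpha^{L-1}/u_{k+1}$, and the sequence $(\alpha_k)$ is unimodal: it is increasing in $k$ as long as $u_{k+1}<\rho\bar\alpha^{L-1}$ and nonincreasing afterwards, so that its maximum is attained at $k_0=\max\{k>0:\ u_k<\rho\bar\alpha^{L-1}\}$ (with $k_0$ taken as $0$ if this set is empty).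
   Context: $a\wedge b$ denotes $\min(a,b)$. These are the mean-field fixed point equations for the stationary distribution $\alpha_k$ of the number of transfers on a link in a large symmetrical best-effort network with routes of length $L$ and link load $\rho$ under the min policy. *)

theory Defs
  imports "HOL-Analysis.Analysis"
begin

text \<open>Index tuples (k_2,...,k_L) with all entries >= 1, represented as functions
  nat => nat that are >= 1 on {2..L} and 0 elsewhere (canonical representation).\<close>
definition idx_tuples :: "nat \<Rightarrow> (nat \<Rightarrow> nat) set" where
  "idx_tuples L = {ks. (\<forall>i\<in>{2..L}. 1 \<le> ks i) \<and> (\<forall>i. i \<notin> {2..L} \<longrightarrow> ks i = 0)}"

definition u_fun :: "nat \<Rightarrow> (nat \<Rightarrow> real) \<Rightarrow> nat \<Rightarrow> real" where
  "u_fun L \<alpha> k = real k *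
     (\<Sum>\<^sub>\<infinity> ks \<in> idx_tuples L.
        Min (insert (1 / real k) ((\<lambda>i. 1 / real (ks i)) ` {2..L})) *
        (\<Prod>i\<in>{2..L}. real (ks i) * \<alpha> (ks i)))"

end

theory Submission
  imports Defs
begin

text \<open>
  Write the summand of \<open>u_k\<close> as \<open>min (1/k) m * P\<close>, where \<open>m\<close> is the minimum
  of the \<open>1/k_i\<close> and \<open>P = \<Prod> k_i \<alpha>_{k_i}\<close> the weight of the index tuple.  Then
  \<open>k * summand = min 1 (k m) * P\<close> grows with \<open>k\<close>, while the summand itself is bounded by
  the summand at \<open>k = 1\<close>.  Consequently all the families are summable or none is; in the
  first case \<open>u\<close> is nondecreasing and positive on \<open>k \<ge> 1\<close>, in the second \<open>u\<close> vanishes there.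

  The second half is about an abstract sequence: if \<open>a (k+1) u (k+1) = c a k\<close> with
  \<open>c > 0\<close>, \<open>u\<close> positive and nondecreasing on \<open>k \<ge> 1\<close>, \<open>a \<ge> 0\<close> not identically zero and
  \<open>\<Sum> k a_k < \<infinity>\<close>, then \<open>a\<close> is positive and unimodal, with the mode at the last \<open>k\<close> where
  \<open>u_k < c\<close>; there are only finitely many such \<open>k\<close> because \<open>k a_k \<rightarrow> 0\<close>.
  The main theorem combines both halves with \<open>c = \<rho> abar^(L-1)\<close>; the case \<open>u = 0\<close> is
  excluded by the fixed point equation, which would then force \<open>\<alpha> = 0\<close>.
\<close>

section \<open>The coefficients \<open>u_k\<close>\<close>

definition tuple_min :: "nat \<Rightarrow> (nat \<Rightarrow> nat) \<Rightarrow> real" where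
  "tuple_min L ks = Min ((\<lambda>i. 1 / real (ks i)) ` {2..L})"

definition tuple_weight :: "nat \<Rightarrow> (nat \<Rightarrow> real) \<Rightarrow> (nat \<Rightarrow> nat) \<Rightarrow> real" where
  "tuple_weight L \<alpha> ks = (\<Prod>i\<in>{2..L}. real (ks i) * \<alpha> (ks i))"

definition u_summand :: "nat \<Rightarrow> (nat \<Rightarrow> real) \<Rightarrow> nat \<Rightarrow> (nat \<Rightarrow> nat) \<Rightarrow> real" where
  "u_summand L \<alpha> k ks = min (1 / real k) (tuple_min L ks) * tuple_weight L \<alpha> ks"

lemma u_fun_eq:
  assumes "2 \<le> L"
  shows "u_fun L \<alpha> k = real k * infsum (u_summand L \<alpha> k) (idx_tuples L)"
proof -
  have "Min (insert (1 / real k) ((\<lambda>i. 1 / real (ks i)) ` {2..L})) =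
        min (1 / real k) (tuple_min L ks)" for ks
    using assms by (simp add: tuple_min_def Min_insert)
  then have "u_summand L \<alpha> k =
      (\<lambda>ks. Min (insert (1 / real k) ((\<lambda>i. 1 / real (ks i)) ` {2..L})) *
        (\<Prod>i\<in>{2..L}. real (ks i) * \<alpha> (ks i)))"
    by (simp add: u_summand_def tuple_weight_def fun_eq_iff)
  then show ?thesis
    by (simp add: u_fun_def)
qed

lemma tuple_min_pos:
  assumes "2 \<le> L" "ks \<in> idx_tuples L"
  shows "tuple_min L ks > 0"
  using assms by (auto simp: tuple_min_def idx_tuples_def)

lemma tuple_weight_nonneg:
  assumes "\<And>k. \<alpha> k \<ge> 0"
  shows "tuple_weight L \<alpha> ks \<ge> 0"
  using assms by (auto simp: tuple_weight_def intro!: prod_nonneg)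

lemma u_summand_nonneg:
  assumes "2 \<le> L" "\<And>k. \<alpha> k \<ge> 0" "ks \<in> idx_tuples L"
  shows "u_summand L \<alpha> k ks \<ge> 0"
  using tuple_min_pos[OF assms(1,3)] tuple_weight_nonneg[where \<alpha> = \<alpha>, OF assms(2)]
  by (simp add: u_summand_def)

lemma u_summand_le_first:
  assumes "\<And>k. \<alpha> k \<ge> 0" "1 \<le> k"
  shows "u_summand L \<alpha> k ks \<le> u_summand L \<alpha> 1 ks"
proof -
  have "1 / real k \<le> 1" using assms(2) by simp
  then have "min (1 / real k) (tuple_min L ks) \<le> min 1 (tuple_min L ks)"
    by (rule min.mono) simp
  then show ?thesis
    unfolding u_summand_def using tuple_weight_nonneg[where \<alpha> = \<alpha>, OF assms(1)]
    by (simp add: mult_right_mono)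
qed

text \<open>On the other hand \<open>k * summand = min 1 (k m) * P\<close> is nondecreasing in \<open>k\<close>.\<close>
lemma scaled_u_summand_mono:
  assumes "2 \<le> L" "\<And>k. \<alpha> k \<ge> 0" "ks \<in> idx_tuples L" "1 \<le> k" "k \<le> k'"
  shows "real k * u_summand L \<alpha> k ks \<le> real k' * u_summand L \<alpha> k' ks"
proof -
  define m where "m = tuple_min L ks"
  have m: "m > 0" using tuple_min_pos[OF assms(1,3)] by (simp add: m_def)
  have scaled: "real j * min (1 / real j) m = min 1 (real j * m)" if "1 \<le> j" for j
    using that by (auto simp: min_def field_simps)
  have "min 1 (real k * m) \<le> min 1 (real k' * m)"
    using m assms(5) by (intro min.mono mult_right_mono) auto
  then show ?thesis
    using tuple_weight_nonneg[where \<alpha> = \<alpha>, OF assms(2)] scaled[OF assms(4)] scaled[of k']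
      assms(4,5)
    by (simp add: u_summand_def m_def[symmetric] mult.assoc[symmetric] mult_right_mono)
qed

lemma u_summand_summable_iff:
  assumes "2 \<le> L" "\<And>k. \<alpha> k \<ge> 0" "1 \<le> k"
  shows "u_summand L \<alpha> k summable_on idx_tuples L \<longleftrightarrow>
         u_summand L \<alpha> 1 summable_on idx_tuples L"
proof
  assume "u_summand L \<alpha> k summable_on idx_tuples L"
  then have "(\<lambda>ks. real k * u_summand L \<alpha> k ks) summable_on idx_tuples L"
    by (rule summable_on_cmult_right)
  then show "u_summand L \<alpha> 1 summable_on idx_tuples L"
    by (rule summable_on_comparison_test)
       (use scaled_u_summand_mono[where \<alpha> = \<alpha>, OF assms(1,2), of _ 1 k] assms(3)
            u_summand_nonneg[where \<alpha> = \<alpha>, OF assms(1,2)] in auto)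
next
  assume "u_summand L \<alpha> 1 summable_on idx_tuples L"
  then show "u_summand L \<alpha> k summable_on idx_tuples L"
    by (rule summable_on_comparison_test)
       (use u_summand_le_first[where \<alpha> = \<alpha>, OF assms(2,3)]
            u_summand_nonneg[where \<alpha> = \<alpha>, OF assms(1,2)] in auto)
qed

text \<open>In the divergent case the infinite sum is \<open>0\<close> by convention, so \<open>u\<close> vanishes on \<open>k \<ge> 1\<close>.\<close>
lemma u_fun_zero_if_divergent:
  assumes "2 \<le> L" "\<And>k. \<alpha> k \<ge> 0" "1 \<le> k"
    and divergent: "\<not> u_summand L \<alpha> 1 summable_on idx_tuples L"
  shows "u_fun L \<alpha> k = 0"
proof -
  have "\<not> u_summand L \<alpha> k summable_on idx_tuples L"
    using divergent u_summand_summable_iff[where \<alpha> = \<alpha>, OF assms(1-3)] by blast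
  then show ?thesis using assms(1) by (simp add: u_fun_eq infsum_not_exists)
qed

lemma u_fun_mono:
  assumes "2 \<le> L" "\<And>k. \<alpha> k \<ge> 0" "1 \<le> k" "k \<le> k'"
  shows "u_fun L \<alpha> k \<le> u_fun L \<alpha> k'"
proof (cases "u_summand L \<alpha> 1 summable_on idx_tuples L")
  case True
  have summable: "(\<lambda>ks. real j * u_summand L \<alpha> j ks) summable_on idx_tuples L" if "1 \<le> j" for j
    using True u_summand_summable_iff[where \<alpha> = \<alpha>, OF assms(1,2) that]
    by (simp add: summable_on_cmult_right)
  have "u_fun L \<alpha> k = infsum (\<lambda>ks. real k * u_summand L \<alpha> k ks) (idx_tuples L)"
    using assms(1) by (simp add: u_fun_eq infsum_cmult_right')
  also have "\<dots> \<le> infsum (\<lambda>ks. real k' * u_summand L \<alpha> k' ks) (idx_tuples L)"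
    using assms by (intro infsum_mono summable scaled_u_summand_mono) auto
  also have "\<dots> = u_fun L \<alpha> k'"
    using assms(1) by (simp add: u_fun_eq infsum_cmult_right')
  finally show ?thesis .
next
  case False
  then show ?thesis
    using u_fun_zero_if_divergent[where \<alpha> = \<alpha>, OF assms(1,2)] assms(3,4) by simp
qed

text \<open>If the series converge and some \<open>\<alpha>_n\<close>, \<open>n \<ge> 1\<close>, is positive, then every \<open>u_k\<close> is
  positive: the constant tuple \<open>(n,\<dots>,n)\<close> contributes a positive term.\<close>
lemma u_fun_pos:
  assumes "2 \<le> L" "\<And>k. \<alpha> k \<ge> 0" "1 \<le> n" "\<alpha> n > 0" "1 \<le> k"
    and summable: "u_summand L \<alpha> 1 summable_on idx_tuples L"
  shows "u_fun L \<alpha> k > 0"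
proof -
  define ks0 where "ks0 = (\<lambda>i::nat. if i \<in> {2..L} then n else 0)"
  have ks0: "ks0 \<in> idx_tuples L"
    using assms(3) by (simp add: ks0_def idx_tuples_def)
  have "tuple_weight L \<alpha> ks0 > 0"
    using assms(3,4) by (auto simp: tuple_weight_def ks0_def intro!: prod_pos)
  then have "0 < u_summand L \<alpha> k ks0"
    using tuple_min_pos[OF assms(1) ks0] assms(5) by (simp add: u_summand_def)
  also have "\<dots> = infsum (u_summand L \<alpha> k) {ks0}" by simp
  also have "\<dots> \<le> infsum (u_summand L \<alpha> k) (idx_tuples L)"
    using ks0 summable u_summand_summable_iff[where \<alpha> = \<alpha>, OF assms(1,2,5)]
      u_summand_nonneg[where \<alpha> = \<alpha>, OF assms(1,2)]
    by (intro infsum_mono2) simp_all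
  finally show ?thesis
    using assms(1,5) by (simp add: u_fun_eq)
qed

lemma u_fun_zero_or_pos:
  assumes "2 \<le> L" "\<And>k. \<alpha> k \<ge> 0" "1 \<le> n" "\<alpha> n > 0"
  shows "(\<forall>k\<ge>1. u_fun L \<alpha> k = 0) \<or> (\<forall>k\<ge>1. u_fun L \<alpha> k > 0)"
proof (cases "u_summand L \<alpha> 1 summable_on idx_tuples L")
  case True
  then have "\<forall>k\<ge>1. u_fun L \<alpha> k > 0"
    using u_fun_pos[of L \<alpha> n] assms by simp
  then show ?thesis ..
next
  case False
  then show ?thesis
    using u_fun_zero_if_divergent[where \<alpha> = \<alpha>, OF assms(1,2)] by blast
qed

section \<open>Sequences defined by a ratio recursion\<close>

text \<open>Then \<open>a_k = 0\<close> iff \<open>a_0 = 0\<close>, so a nonnegative solution that is not identically zero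
  is positive.\<close>
lemma ratio_recursion_pos:
  fixes a u :: "nat \<Rightarrow> real"
  assumes c: "c > 0" and u: "\<And>k. 1 \<le> k \<Longrightarrow> u k > 0"
    and rec: "\<And>k. a (k + 1) * u (k + 1) = c * a k"
    and nonneg: "\<And>k. a k \<ge> 0" and nonzero: "\<exists>k. a k \<noteq> 0"
  shows "a k > 0"
proof -
  have zero_iff: "a j = 0 \<longleftrightarrow> a 0 = 0" for j
  proof (induction j)
    case (Suc j)
    have "a (Suc j) = 0 \<longleftrightarrow> a j = 0"
      using rec[of j] u[of "j + 1"] c by auto
    then show ?case using Suc by simp
  qed simp
  then have "a k \<noteq> 0" using nonzero by blast
  then show ?thesis using nonneg[of k] by simp
qed

lemma weighted_summable_drops_below:
  fixes a :: "nat \<Rightarrow> real"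
  assumes summ: "summable (\<lambda>k. real k * a k)" and pos: "\<And>k. a k > 0"
  obtains k where "a k < a 0"
proof -
  have "(\<lambda>k. real k * a k) \<longlonglongrightarrow> 0" using summ by (rule summable_LIMSEQ_zero)
  then have "eventually (\<lambda>k. real k * a k < a 0) sequentially"
    using pos[of 0] by (rule order_tendstoD)
  then obtain N where "\<forall>k\<ge>N. real k * a k < a 0"
    unfolding eventually_sequentially by blast
  then have N: "real (N + 1) * a (N + 1) < a 0" by (meson le_add1)
  have "a (N + 1) \<le> real (N + 1) * a (N + 1)"
    using pos[of "N + 1"] by (simp add: algebra_simps)
  with N show ?thesis by (intro that[of "N + 1"]) simp
qed

lemma positive_index_of_weighted_sum:
  fixes a :: "nat \<Rightarrow> real"
  assumes nonneg: "\<And>k. a k \<ge> 0" and sum_pos: "(\<Sum>k. real k * a k) > 0"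
  obtains n where "1 \<le> n" "a n > 0"
proof -
  have "\<exists>n. real n * a n \<noteq> 0"
  proof (rule ccontr)
    assume "\<not> (\<exists>n. real n * a n \<noteq> 0)"
    then have "(\<lambda>k. real k * a k) = (\<lambda>_. 0)" by (intro ext) simp
    with sum_pos show False by simp
  qed
  then obtain n where "real n * a n \<noteq> 0" by blast
  then have "n \<noteq> 0" "a n \<noteq> 0" by auto
  then have "1 \<le> n" "a n > 0" using nonneg[of n] by linarith+
  then show ?thesis by (rule that)
qed

text \<open>Let \<open>S = {k > 0. u_k < c}\<close>: the sequence strictly increases in each step
  \<open>k \<rightarrow> k+1\<close> with \<open>k+1 \<in> S\<close> and does not increase otherwise; as \<open>u\<close> is nondecreasing,
  \<open>S\<close> is an initial segment of the positive integers, finite by summability.\<close>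
lemma ratio_recursion_unimodal:
  fixes a u :: "nat \<Rightarrow> real"
  assumes c: "c > 0" and u: "\<And>k. 1 \<le> k \<Longrightarrow> u k > 0"
    and u_mono: "\<And>k k'. 1 \<le> k \<Longrightarrow> k \<le> k' \<Longrightarrow> u k \<le> u k'"
    and rec: "\<And>k. a (k + 1) * u (k + 1) = c * a k"
    and pos: "\<And>k. a k > 0" and summ: "summable (\<lambda>k. real k * a k)"
  shows "(\<forall>k. u (k + 1) < c \<longrightarrow> a k < a (k + 1))
    \<and> (\<forall>k. u (k + 1) \<ge> c \<longrightarrow> (\<forall>j\<ge>k. a (j + 1) \<le> a j))
    \<and> (let S = {k. 0 < k \<and> u k < c};
           k0 = (if S = {} then 0 else Max S)
       in finite S \<and> (\<forall>k<k0. a k < a (k + 1)) \<and> (\<forall>k\<ge>k0. a (k + 1) \<le> a k)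
          \<and> (\<forall>k. a k \<le> a k0))"
proof -
  have inc: "a k < a (k + 1)" if "u (k + 1) < c" for k
  proof -
    have "u (k + 1) * a k < c * a k" using that pos[of k] by simp
    also have "\<dots> = u (k + 1) * a (k + 1)" using rec[of k] by (metis mult.commute)
    finally show ?thesis using u[of "k + 1"] by simp
  qed
  have dec: "a (k + 1) \<le> a k" if "u (k + 1) \<ge> c" for k
  proof -
    have "u (k + 1) * a (k + 1) = c * a k" using rec[of k] by (metis mult.commute)
    also have "\<dots> \<le> u (k + 1) * a k" using that pos[of k] by simp
    finally show ?thesis using u[of "k + 1"] by simp
  qed
  have dec_from: "\<forall>j\<ge>k. a (j + 1) \<le> a j" if "u (k + 1) \<ge> c" for k
  proof (intro allI impI)
    fix j assume "k \<le> j"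
    then have "u (k + 1) \<le> u (j + 1)" by (intro u_mono) auto
    with that show "a (j + 1) \<le> a j" by (intro dec) simp
  qed
  define S where "S = {k. 0 < k \<and> u k < c}"
  define k0 where "k0 = (if S = {} then 0 else Max S)"
  have finS: "finite S"
  proof (rule ccontr)
    assume "infinite S"
    have small: "u (k + 1) < c" for k
    proof -
      obtain s where "s \<in> S" "k + 1 \<le> s"
        using \<open>infinite S\<close> by (meson infinite_nat_iff_unbounded_le)
      then show ?thesis using u_mono[of "k + 1" s] by (simp add: S_def)
    qed
    have increasing: "a 0 \<le> a k" for k
    proof (rule lift_Suc_mono_le)
      show "a n \<le> a (Suc n)" for n using inc[OF small[of n]] by simp
    qed simp
    obtain k where "a k < a 0"
      using weighted_summable_drops_below[of a] summ pos by blast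
    with increasing[of k] show False by simp
  qed
  have below_k0: "a k < a (k + 1)" if "k < k0" for k
  proof -
    have "k0 \<in> S" using that finS by (simp add: k0_def split: if_splits)
    then show ?thesis
      using that u_mono[of "k + 1" k0] by (intro inc) (simp add: S_def)
  qed
  have above_k0: "a (k + 1) \<le> a k" if "k0 \<le> k" for k
  proof -
    have "k + 1 \<notin> S"
      using that finS Max_ge[OF finS, of "k + 1"] by (auto simp: k0_def split: if_splits)
    then show ?thesis by (intro dec) (simp add: S_def)
  qed
  have max_k0: "a k \<le> a k0" for k
  proof (cases "k \<le> k0")
    case True
    show ?thesis
    proof (rule lift_Suc_mono_le_ivl[of "{..<k0}"])
      show "a n \<le> a (Suc n)" if "n \<in> {..<k0}" for n
        using below_k0[of n] that by simp
    qed (use True in auto)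
  next
    case False
    show ?thesis
    proof (rule lift_Suc_antimono_le_ivl[of "{k0..}"])
      show "a (Suc n) \<le> a n" if "n \<in> {k0..}" for n
        using above_k0[of n] that by simp
    qed (use False in auto)
  qed
  show ?thesis
    unfolding Let_def S_def[symmetric] k0_def[symmetric]
    using inc dec_from finS below_k0 above_k0 max_k0 by simp
qed

theorem mainTheorem5:
  fixes L :: nat and \<rho> :: real and \<alpha> :: "nat \<Rightarrow> real" and abar :: real
  assumes L: "L \<ge> 2"
    and rho: "\<rho> > 0"
    and nonneg: "\<And>k. \<alpha> k \<ge> 0"
    and nonzero: "\<exists>k. \<alpha> k \<noteq> 0"
    and summ: "summable (\<lambda>k. real k * \<alpha> k)"
    and abar_def: "abar = (\<Sum>k. real k * \<alpha> k)"
    and abar_pos: "abar > 0"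
    and fp: "\<And>k. \<alpha> (k + 1) * u_fun L \<alpha> (k + 1) = \<rho> * abar ^ (L - 1) * \<alpha> k"
  shows "(\<forall>k. \<alpha> k > 0)
    \<and> (\<forall>k. \<alpha> (k + 1) / \<alpha> k = \<rho> * abar ^ (L - 1) / u_fun L \<alpha> (k + 1))
    \<and> (\<forall>k. u_fun L \<alpha> (k + 1) < \<rho> * abar ^ (L - 1) \<longrightarrow> \<alpha> k < \<alpha> (k + 1))
    \<and> (\<forall>k. u_fun L \<alpha> (k + 1) \<ge> \<rho> * abar ^ (L - 1) \<longrightarrow>
          (\<forall>j\<ge>k. \<alpha> (j + 1) \<le> \<alpha> j))
    \<and> (let S = {k. 0 < k \<and> u_fun L \<alpha> k < \<rho> * abar ^ (L - 1)};
           k0 = (if S = {} then 0 else Max S)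
       in finite S \<and> (\<forall>k<k0. \<alpha> k < \<alpha> (k + 1)) \<and> (\<forall>k\<ge>k0. \<alpha> (k + 1) \<le> \<alpha> k)
          \<and> (\<forall>k. \<alpha> k \<le> \<alpha> k0))"
proof -
  define c where "c = \<rho> * abar ^ (L - 1)"
  have c: "c > 0" using rho abar_pos by (simp add: c_def)
  have fp_c: "\<alpha> (k + 1) * u_fun L \<alpha> (k + 1) = c * \<alpha> k" for k
    using fp by (simp add: c_def)
  obtain n where n: "1 \<le> n" "\<alpha> n > 0"
    using positive_index_of_weighted_sum[of \<alpha>] nonneg abar_pos abar_def by blast
  have u_pos: "u_fun L \<alpha> k > 0" if "1 \<le> k" for k
  proof -
    have "\<not> (\<forall>k\<ge>1. u_fun L \<alpha> k = 0)"
    proof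
      assume "\<forall>k\<ge>1. u_fun L \<alpha> k = 0"
      then have "\<alpha> k = 0" for k using fp_c[of k] c by simp
      with nonzero show False by simp
    qed
    then show ?thesis using u_fun_zero_or_pos[where \<alpha> = \<alpha>, OF L nonneg n] that by blast
  qed
  have pos: "\<alpha> k > 0" for k
    by (rule ratio_recursion_pos[where u = "u_fun L \<alpha>" and a = \<alpha>, OF c u_pos fp_c nonneg nonzero])
  have ratio: "\<alpha> (k + 1) / \<alpha> k = c / u_fun L \<alpha> (k + 1)" for k
    using fp_c[of k] pos[of k] u_pos[of "k + 1"] by (simp add: field_simps)
  note unimodal = ratio_recursion_unimodal[where u = "u_fun L \<alpha>" and a = \<alpha>,
      OF c u_pos u_fun_mono[where \<alpha> = \<alpha>, OF L nonneg] fp_c pos summ]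
  show ?thesis
    unfolding c_def[symmetric] using pos ratio unimodal by blast
qed

end
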